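(* Let $(M,d)$ be a complete metric space and $X\subseteq M$ compact. Assume that every $\mu\in P(X)$ admits a barycenter in $M$, and that $conv(X)$ is compact. Assume moreover that at least one variance maximizing probability measure $\mu\in P(X)$ (i.e. a maximizer of $Var$ over $P(X)$) has a unique barycenter. Then the circumradius of $X$ in $M$ equals the circumradius of $i(X)$ in $(P(M),W_2)$.
   Context: $P(\cdot)$ denotes Borel probability measures. $Var(\mu)=\inf_{y\in M}\int_X d^2(x,y)\,d\mu(x)$, and a barycenter of $\mu$ is a point of $M$ attaining this infimum; $conv(X)$ is the set of all barycenters of measures in $P(X)$. The circumradius of $X$ in $M$ is $\inf_{y\in M}\sup_{x\in X}d(x,y)$. $W_2$ is the Wasserstein distance on $P(M)$, with $W_2^2(\delta_x,\nu)=\int_M d^2(x,y)\,d\nu(y)$; $i(x)=\delta_x$, and the circumradius of $i(X)$ is $\inf_{\nu\in P(M)}\sup_{x\in X}W_2(\delta_x,\nu)$. *)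

theory Defs
  imports "HOL-Probability.Probability"
begin

text \<open>The ambient complete metric space M is the whole type 'a.\<close>

definition prob_measures :: "'a::metric_space measure set" where
  "prob_measures = {\<nu>. prob_space \<nu> \<and> sets \<nu> = sets borel}"

definition prob_measures_on :: "'a::metric_space set \<Rightarrow> 'a measure set" where
  "prob_measures_on X = {\<mu> \<in> prob_measures. emeasure \<mu> X = 1}"

definition Var :: "'a::metric_space measure \<Rightarrow> real" where
  "Var \<mu> = (INF y. \<integral>x. (dist x y)\<^sup>2 \<partial>\<mu>)"

definition is_barycenter :: "'a::metric_space measure \<Rightarrow> 'a \<Rightarrow> bool" where
  "is_barycenter \<mu> y \<longleftrightarrow> (\<integral>x. (dist x y)\<^sup>2 \<partial>\<mu>) = Var \<mu>"

definition conv :: "'a::metric_space set \<Rightarrow> 'a set" where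
  "conv X = {y. \<exists>\<mu>\<in>prob_measures_on X. is_barycenter \<mu> y}"

definition circumradius :: "'a::metric_space set \<Rightarrow> ennreal" where
  "circumradius X = (INF y. SUP x\<in>X. ennreal (dist x y))"

text \<open>W_2(delta_x, nu) = (integral of d(x,y)^2 d nu(y))^(1/2), possibly infinite.\<close>
definition W2_dirac :: "'a::metric_space \<Rightarrow> 'a measure \<Rightarrow> ennreal" where
  "W2_dirac x \<nu> =
     (let I = (\<integral>\<^sup>+ y. ennreal ((dist x y)\<^sup>2) \<partial>\<nu>)
      in if I = \<infinity> then \<infinity> else ennreal (sqrt (enn2real I)))"

definition circumradius_dirac :: "'a::metric_space set \<Rightarrow> ennreal" where
  "circumradius_dirac X = (INF \<nu>\<in>prob_measures. SUP x\<in>X. W2_dirac x \<nu>)"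

end

theory Submission
  imports Defs
begin

text \<open>
  For every \<open>\<mu> \<in> P(X)\<close> and \<open>\<nu> \<in> P(M)\<close>, Fubini gives
  \<open>Var \<mu> \<le> \<integral>\<integral> d\<^sup>2(x,y) d\<mu>(x) d\<nu>(y) \<le> sup\<^sub>x\<^sub>\<in>\<^sub>X W\<^sub>2(\<delta>\<^sub>x,\<nu>)\<^sup>2\<close>, so \<open>sqrt (Var \<mu>)\<close> bounds the
  circumradius of \<open>i(X)\<close> from below, while Dirac measures \<open>\<nu> = \<delta>\<^sub>y\<close> give the reverse
  inequality. It remains to find a ball of radius \<open>sqrt (Var \<mu>)\<close> containing \<open>X\<close>. Take \<open>\<mu>\<close>
  variance maximizing with unique barycenter \<open>b\<close> and \<open>x\<^sub>0 \<in> X\<close>. A barycenter \<open>b\<^sub>t \<in> conv X\<close>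
  of \<open>(1 - t)\<mu> + t\<delta>\<^sub>x\<^sub>0\<close> satisfies
  \<open>(1 - t) \<integral> d\<^sup>2(x,b\<^sub>t) d\<mu> + t d\<^sup>2(x\<^sub>0,b\<^sub>t) \<le> Var \<mu>\<close>, hence \<open>d\<^sup>2(x\<^sub>0,b\<^sub>t) \<le> Var \<mu>\<close> and
  \<open>\<integral> d\<^sup>2(x,b\<^sub>t) d\<mu> \<le> Var \<mu> / (1 - t)\<close>. As \<open>t \<rightarrow> 0\<close>, compactness of \<open>conv X\<close> yields an
  accumulation point which is a barycenter of \<open>\<mu>\<close>, i.e. \<open>b\<close>, and so \<open>d\<^sup>2(x\<^sub>0,b) \<le> Var \<mu>\<close>.
\<close>

text \<open>The library's \<open>borel_measurable_dist\<close> requires a second countable space.\<close>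

lemma borel_measurable_dist_point[measurable (raw)]:
  fixes c :: "'a::metric_space"
  assumes "f \<in> M \<rightarrow>\<^sub>M borel"
  shows "(\<lambda>z. dist c (f z)) \<in> borel_measurable M" "(\<lambda>z. dist (f z) c) \<in> borel_measurable M"
  by (intro measurable_compose[OF assms] borel_measurable_continuous_onI continuous_intros)+

lemma prob_measures_onD:
  assumes "\<mu> \<in> prob_measures_on X"
  shows "prob_space \<mu>" "sets \<mu> = sets borel" "X \<in> sets borel" "AE x in \<mu>. x \<in> X"
proof -
  show ps: "prob_space \<mu>" and s: "sets \<mu> = sets borel"
    using assms unfolding prob_measures_on_def prob_measures_def by auto
  have X1: "emeasure \<mu> X = 1"
    using assms unfolding prob_measures_on_def by auto
  then have "X \<in> sets \<mu>"
    using emeasure_notin_sets by fastforce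
  then show "X \<in> sets borel"
    using s by simp
  show "AE x in \<mu>. x \<in> X"
    using prob_space.AE_in_set_eq_1[OF ps \<open>X \<in> sets \<mu>\<close>] X1 by (simp add: measure_def)
qed

lemma integrable_dist_square:
  assumes "bounded X" "\<mu> \<in> prob_measures_on X"
  shows "integrable \<mu> (\<lambda>x. (dist x y)\<^sup>2)"
proof -
  interpret prob_space \<mu>
    using prob_measures_onD[OF assms(2)] by simp
  obtain e where e: "\<forall>x\<in>X. dist y x \<le> e"
    using bounded_any_center assms(1) by blast
  have "AE x in \<mu>. norm ((dist x y)\<^sup>2) \<le> norm (e\<^sup>2)"
    using prob_measures_onD(4)[OF assms(2)]
  proof eventually_elim
    case (elim x)
    then have "dist x y \<le> e"
      using e by (simp add: dist_commute)
    then show ?case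
      by (simp add: power_mono)
  qed
  then show ?thesis
    using prob_measures_onD(2)[OF assms(2)]
    by (intro Bochner_Integration.integrable_bound[OF integrable_const[of "e\<^sup>2"]]) auto
qed

lemma nn_integral_dist_square:
  assumes "bounded X" "\<mu> \<in> prob_measures_on X"
  shows "(\<integral>\<^sup>+x. ennreal ((dist x y)\<^sup>2) \<partial>\<mu>) = ennreal (\<integral>x. (dist x y)\<^sup>2 \<partial>\<mu>)"
  by (rule nn_integral_eq_integral) (auto intro: integrable_dist_square[OF assms])

lemma Var_le_integral: "Var \<mu> \<le> (\<integral>x. (dist x y)\<^sup>2 \<partial>\<mu>)"
  unfolding Var_def by (rule cINF_lower) (auto intro!: bdd_belowI[of _ 0])

lemma W2_dirac_square: "(W2_dirac x \<nu>)\<^sup>2 = (\<integral>\<^sup>+y. ennreal ((dist x y)\<^sup>2) \<partial>\<nu>)"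
proof (cases "(\<integral>\<^sup>+y. ennreal ((dist x y)\<^sup>2) \<partial>\<nu>) = \<infinity>")
  case False
  define I where "I = (\<integral>\<^sup>+y. ennreal ((dist x y)\<^sup>2) \<partial>\<nu>)"
  have "(ennreal (sqrt (enn2real I)))\<^sup>2 = I"
    using False unfolding I_def[symmetric] by (simp add: ennreal_power less_top)
  then show ?thesis
    using False unfolding W2_dirac_def I_def[symmetric] by simp
qed (simp add: W2_dirac_def)

lemma W2_dirac_return: "W2_dirac x (return borel y) = ennreal (dist x y)"
  by (simp add: W2_dirac_def nn_integral_return)

lemma circumradius_le:
  assumes "\<forall>x\<in>X. dist x y \<le> r"
  shows "circumradius X \<le> ennreal r"
proof -
  have "circumradius X \<le> (SUP x\<in>X. ennreal (dist x y))"
    unfolding circumradius_def by (rule INF_lower) simp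
  also have "\<dots> \<le> ennreal r"
    using assms by (intro SUP_least ennreal_leI) auto
  finally show ?thesis .
qed

lemma circumradius_dirac_le_circumradius: "circumradius_dirac X \<le> circumradius X"
  unfolding circumradius_dirac_def circumradius_def
proof (rule INF_mono)
  fix y :: 'a
  have "return borel y \<in> prob_measures"
    unfolding prob_measures_def by (auto intro: prob_space_return)
  then show "\<exists>\<nu>\<in>prob_measures. (SUP x\<in>X. W2_dirac x \<nu>) \<le> (SUP x\<in>X. ennreal (dist x y))"
    by (intro bexI[of _ "return borel y"]) (auto simp: W2_dirac_return)
qed

lemma compact_imp_countable_dense_subset:
  fixes X :: "'a::metric_space set"
  assumes "compact X"
  obtains D where "countable D" "D \<subseteq> X" "\<And>x e. x \<in> X \<Longrightarrow> 0 < e \<Longrightarrow> \<exists>c\<in>D. dist x c < e"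
proof -
  have "\<exists>F. F \<subseteq> X \<and> finite F \<and> X \<subseteq> (\<Union>c\<in>F. ball c (1 / Suc n))" for n
    by (rule compactE_image[OF assms, of X "\<lambda>c. ball c (1 / Suc n)"]) auto
  then obtain F where F: "\<And>n. F n \<subseteq> X" "\<And>n. finite (F n)"
      "\<And>n. X \<subseteq> (\<Union>c\<in>F n. ball c (1 / Suc n))"
    by metis
  show ?thesis
  proof
    show "countable (\<Union>n. F n)"
      using F(2) by (auto intro: countable_finite)
    show "(\<Union>n. F n) \<subseteq> X"
      using F(1) by auto
    fix x e assume "x \<in> X" "(0::real) < e"
    obtain n where n: "1 / Suc n < e"
      using \<open>0 < e\<close> nat_approx_posE by metis
    obtain c where "c \<in> F n" "dist c x < 1 / Suc n"
      using F(3)[of n] \<open>x \<in> X\<close> by auto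
    then show "\<exists>c\<in>(\<Union>n. F n). dist x c < e"
      using n by (intro bexI[of _ c]) (auto simp: dist_commute)
  qed
qed

text \<open>
  Without second countability, measurability of \<open>dist\<close> on \<open>borel \<Otimes>\<^sub>M borel\<close> is not
  available; on \<open>X \<times> M\<close> it follows from \<open>d(x,y) = inf\<^sub>c\<^sub>\<in>\<^sub>D (d(x,c) + d(c,y))\<close> for a
  countable dense \<open>D \<subseteq> X\<close>.
\<close>

lemma borel_measurable_indicator_dist_square:
  fixes X :: "'a::metric_space set"
  assumes "compact X"
  shows "(\<lambda>(x, y). indicator X x * ennreal ((dist x y)\<^sup>2)) \<in> borel_measurable (borel \<Otimes>\<^sub>M borel)"
proof -
  obtain D where D: "countable D" "D \<subseteq> X" "\<And>x e. x \<in> X \<Longrightarrow> 0 < e \<Longrightarrow> \<exists>c\<in>D. dist x c < e"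
    using compact_imp_countable_dense_subset[OF assms] by blast
  have dist_eq_INF: "ennreal (dist x y) = (INF c\<in>D. ennreal (dist x c + dist c y))"
    if "x \<in> X" for x y
  proof (rule antisym)
    show "ennreal (dist x y) \<le> (INF c\<in>D. ennreal (dist x c + dist c y))"
      by (intro INF_greatest ennreal_leI dist_triangle)
    show "(INF c\<in>D. ennreal (dist x c + dist c y)) \<le> ennreal (dist x y)"
    proof (rule ennreal_le_epsilon)
      fix e :: real assume "0 < e"
      then obtain c where c: "c \<in> D" "dist x c < e / 2"
        using D(3)[OF \<open>x \<in> X\<close>, of "e / 2"] by auto
      have "(INF c\<in>D. ennreal (dist x c + dist c y)) \<le> ennreal (dist x c + dist c y)"
        using c(1) by (rule INF_lower)
      also have "\<dots> \<le> ennreal (dist x y + e)"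
        using c(2) dist_triangle[of c y x] by (intro ennreal_leI) (simp add: dist_commute)
      finally show "(INF c\<in>D. ennreal (dist x c + dist c y)) \<le> ennreal (dist x y) + ennreal e"
        using \<open>0 < e\<close> by (simp add: ennreal_plus)
    qed
  qed
  have "(\<lambda>(x, y). indicator X x * ennreal ((dist x y)\<^sup>2)) =
      (\<lambda>p. indicator X (fst p) * (INF c\<in>D. ennreal (dist (fst p) c + dist c (snd p)))\<^sup>2)"
    by (auto simp: indicator_def dist_eq_INF[symmetric] ennreal_power simp del: ennreal_plus)
  moreover have "X \<in> sets borel"
    using assms by (simp add: borel_closed compact_imp_closed)
  ultimately show ?thesis
    using D(1) by simp measurable
qed

lemma Var_le_SUP_W2_dirac_square:
  fixes X :: "'a::metric_space set"
  assumes X: "compact X" and \<mu>: "\<mu> \<in> prob_measures_on X" and \<nu>: "\<nu> \<in> prob_measures"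
  shows "ennreal (Var \<mu>) \<le> (SUP x\<in>X. W2_dirac x \<nu>)\<^sup>2"
proof -
  interpret \<mu>: prob_space \<mu>
    using prob_measures_onD[OF \<mu>] by simp
  have sets_\<nu>: "sets \<nu> = sets borel" and "prob_space \<nu>"
    using \<nu> unfolding prob_measures_def by auto
  interpret \<nu>: prob_space \<nu> by fact
  interpret pair_sigma_finite \<mu> \<nu>
    by (simp add: pair_sigma_finite_def \<mu>.sigma_finite_measure_axioms \<nu>.sigma_finite_measure_axioms)
  define f where "f x y = indicator X x * ennreal ((dist x y)\<^sup>2)" for x y
  define c where "c = (SUP x\<in>X. W2_dirac x \<nu>)"
  have f_measurable: "case_prod f \<in> borel_measurable (\<mu> \<Otimes>\<^sub>M \<nu>)"
    unfolding f_def measurable_cong_sets[OF sets_pair_measure_cong[OF prob_measures_onD(2)[OF \<mu>] sets_\<nu>] refl]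
    by (rule borel_measurable_indicator_dist_square[OF X])
  have "ennreal (Var \<mu>) = (\<integral>\<^sup>+y. ennreal (Var \<mu>) \<partial>\<nu>)"
    by (simp add: \<nu>.emeasure_space_1)
  also have "\<dots> \<le> (\<integral>\<^sup>+y. (\<integral>\<^sup>+x. f x y \<partial>\<mu>) \<partial>\<nu>)"
  proof (rule nn_integral_mono)
    fix y
    have "(\<integral>\<^sup>+x. f x y \<partial>\<mu>) = (\<integral>\<^sup>+x. ennreal ((dist x y)\<^sup>2) \<partial>\<mu>)"
      unfolding f_def using prob_measures_onD(4)[OF \<mu>]
      by (intro nn_integral_cong_AE) (auto elim!: eventually_mono)
    also have "\<dots> = ennreal (\<integral>x. (dist x y)\<^sup>2 \<partial>\<mu>)"
      by (rule nn_integral_dist_square[OF compact_imp_bounded[OF X] \<mu>])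
    finally show "ennreal (Var \<mu>) \<le> (\<integral>\<^sup>+x. f x y \<partial>\<mu>)"
      by (simp add: ennreal_leI Var_le_integral)
  qed
  also have "\<dots> = (\<integral>\<^sup>+x. (\<integral>\<^sup>+y. f x y \<partial>\<nu>) \<partial>\<mu>)"
    by (rule Fubini'[OF f_measurable])
  also have "\<dots> \<le> (\<integral>\<^sup>+x. c\<^sup>2 \<partial>\<mu>)"
  proof (rule nn_integral_mono_AE)
    show "AE x in \<mu>. (\<integral>\<^sup>+y. f x y \<partial>\<nu>) \<le> c\<^sup>2"
      using prob_measures_onD(4)[OF \<mu>]
    proof eventually_elim
      case (elim x)
      then have "(\<integral>\<^sup>+y. f x y \<partial>\<nu>) = (W2_dirac x \<nu>)\<^sup>2"
        unfolding f_def W2_dirac_square by simp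
      also have "\<dots> \<le> c\<^sup>2"
        unfolding c_def using elim by (intro power_mono SUP_upper) auto
      finally show ?case .
    qed
  qed
  also have "\<dots> = c\<^sup>2"
    by (simp add: \<mu>.emeasure_space_1)
  finally show ?thesis
    unfolding c_def .
qed

lemma ennreal_sqrt_le_of_le_power2:
  assumes "ennreal v \<le> c\<^sup>2"
  shows "ennreal (sqrt v) \<le> c"
proof (cases c)
  case (real r)
  then have "v \<le> r\<^sup>2"
    using assms by (cases "v \<le> 0") (auto simp: ennreal_power)
  then show ?thesis
    using real by (simp add: ennreal_leI real_le_lsqrt)
qed simp

lemma sqrt_Var_le_circumradius_dirac:
  fixes X :: "'a::metric_space set"
  assumes "compact X" "\<mu> \<in> prob_measures_on X"
  shows "ennreal (sqrt (Var \<mu>)) \<le> circumradius_dirac X"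
  unfolding circumradius_dirac_def
  using Var_le_SUP_W2_dirac_square[OF assms]
  by (intro INF_greatest ennreal_sqrt_le_of_le_power2)

text \<open>The convex combination \<open>(1 - t)\<mu> + t\<delta>\<^sub>x\<^sub>0\<close>.\<close>

definition mix_dirac :: "real \<Rightarrow> 'a \<Rightarrow> 'a::metric_space measure \<Rightarrow> 'a measure" where
  "mix_dirac t x0 \<mu> = measure_pmf (bernoulli_pmf t) \<bind> (\<lambda>b. if b then return borel x0 else \<mu>)"

lemma mix_dirac_kernel_measurable:
  assumes "\<mu> \<in> prob_measures"
  shows "(\<lambda>b. if b then return borel x0 else \<mu>) \<in> count_space UNIV \<rightarrow>\<^sub>M prob_algebra borel"
  using assms by (auto simp: measurable_count_space_eq1 space_prob_algebra prob_measures_def prob_space_return)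

lemma mix_dirac_in_prob_measures:
  assumes "\<mu> \<in> prob_measures"
  shows "mix_dirac t x0 \<mu> \<in> prob_measures"
proof -
  have "measure_pmf (bernoulli_pmf t) \<in> space (prob_algebra (count_space UNIV))"
    by (auto simp: space_prob_algebra measure_pmf.prob_space_axioms)
  then show ?thesis
    unfolding mix_dirac_def prob_measures_def
    using prob_space_bind' sets_bind' mix_dirac_kernel_measurable[OF assms] by blast
qed

lemma nn_integral_mix_dirac:
  assumes "\<mu> \<in> prob_measures" "g \<in> borel_measurable borel" "0 \<le> t" "t \<le> 1"
  shows "(\<integral>\<^sup>+x. g x \<partial>mix_dirac t x0 \<mu>) = ennreal t * g x0 + ennreal (1 - t) * (\<integral>\<^sup>+x. g x \<partial>\<mu>)"
proof -
  have "(\<lambda>b. if b then return borel x0 else \<mu>) \<in> measure_pmf (bernoulli_pmf t) \<rightarrow>\<^sub>M subprob_algebra borel"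
    using measurable_prob_algebraD[OF mix_dirac_kernel_measurable[OF assms(1)]]
    by (simp cong: measurable_cong_sets)
  then show ?thesis
    unfolding mix_dirac_def using assms(2-4)
    by (simp add: nn_integral_bind[where B = borel] nn_integral_bernoulli_pmf nn_integral_return
        mult.commute)
qed

lemma mix_dirac_in_prob_measures_on:
  assumes "\<mu> \<in> prob_measures_on X" "x0 \<in> X" "0 \<le> t" "t \<le> 1"
  shows "mix_dirac t x0 \<mu> \<in> prob_measures_on X"
proof -
  have \<mu>: "\<mu> \<in> prob_measures" "emeasure \<mu> X = 1"
    using assms(1) unfolding prob_measures_on_def by auto
  have X: "X \<in> sets borel"
    using prob_measures_onD(3)[OF assms(1)] .
  have "emeasure (mix_dirac t x0 \<mu>) X = (\<integral>\<^sup>+x. indicator X x \<partial>mix_dirac t x0 \<mu>)"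
    using X mix_dirac_in_prob_measures[OF \<mu>(1)] by (simp add: prob_measures_def)
  also have "\<dots> = ennreal t + ennreal (1 - t)"
    using \<mu> X assms(2-4) prob_measures_onD(2)[OF assms(1)] by (simp add: nn_integral_mix_dirac)
  also have "\<dots> = 1"
    using assms(3,4) by (simp flip: ennreal_plus)
  finally show ?thesis
    using mix_dirac_in_prob_measures[OF \<mu>(1)] unfolding prob_measures_on_def by simp
qed

lemma integral_dist_square_mix_dirac:
  assumes "bounded X" "\<mu> \<in> prob_measures_on X" "x0 \<in> X" "0 \<le> t" "t \<le> 1"
  shows "(\<integral>x. (dist x y)\<^sup>2 \<partial>mix_dirac t x0 \<mu>)
      = (1 - t) * (\<integral>x. (dist x y)\<^sup>2 \<partial>\<mu>) + t * (dist x0 y)\<^sup>2"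
proof -
  have \<mu>: "\<mu> \<in> prob_measures"
    using assms(2) unfolding prob_measures_on_def by auto
  have nonneg: "0 \<le> (\<integral>x. (dist x y)\<^sup>2 \<partial>\<mu>)" "0 \<le> (\<integral>x. (dist x y)\<^sup>2 \<partial>mix_dirac t x0 \<mu>)"
    by simp_all
  have "ennreal (\<integral>x. (dist x y)\<^sup>2 \<partial>mix_dirac t x0 \<mu>)
      = (\<integral>\<^sup>+x. ennreal ((dist x y)\<^sup>2) \<partial>mix_dirac t x0 \<mu>)"
    using nn_integral_dist_square[OF assms(1) mix_dirac_in_prob_measures_on[OF assms(2-5)]] by simp
  also have "\<dots> = ennreal t * ennreal ((dist x0 y)\<^sup>2) + ennreal (1 - t) * ennreal (\<integral>x. (dist x y)\<^sup>2 \<partial>\<mu>)"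
    using assms(4,5) by (simp add: nn_integral_mix_dirac[OF \<mu>] nn_integral_dist_square[OF assms(1,2)])
  also have "\<dots> = ennreal ((1 - t) * (\<integral>x. (dist x y)\<^sup>2 \<partial>\<mu>) + t * (dist x0 y)\<^sup>2)"
    using assms(4,5) nonneg by (simp add: ennreal_mult' add.commute)
  finally show ?thesis
    using assms(4,5) nonneg by (simp add: ennreal_inj del: ennreal_plus)
qed

lemma abs_integral_dist_square_diff_le:
  assumes "bounded X" "\<mu> \<in> prob_measures_on X" "\<forall>x\<in>X. dist x z \<le> R"
  shows "\<bar>(\<integral>x. (dist x y)\<^sup>2 \<partial>\<mu>) - (\<integral>x. (dist x z)\<^sup>2 \<partial>\<mu>)\<bar> \<le> dist y z * (2 * R + dist y z)"
proof -
  interpret prob_space \<mu>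
    using prob_measures_onD(1)[OF assms(2)] .
  have pointwise: "\<bar>(dist x y)\<^sup>2 - (dist x z)\<^sup>2\<bar> \<le> dist y z * (2 * R + dist y z)" if "x \<in> X" for x
  proof -
    have "\<bar>dist x y - dist x z\<bar> \<le> dist y z"
      using dist_triangle3[of x y z] dist_triangle3[of x z y] by (simp add: dist_commute abs_le_iff)
    moreover have "dist x y + dist x z \<le> 2 * R + dist y z"
      using assms(3) that dist_triangle[of x y z] dist_commute[of z y] by fastforce
    ultimately have "\<bar>dist x y - dist x z\<bar> * (dist x y + dist x z) \<le> dist y z * (2 * R + dist y z)"
      by (intro mult_mono) auto
    moreover have "(dist x y)\<^sup>2 - (dist x z)\<^sup>2 = (dist x y - dist x z) * (dist x y + dist x z)"
      by (simp add: power2_eq_square algebra_simps)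
    ultimately show ?thesis
      by (simp add: abs_mult)
  qed
  have integrable_diff: "integrable \<mu> (\<lambda>x. (dist x y)\<^sup>2 - (dist x z)\<^sup>2)"
    by (intro Bochner_Integration.integrable_diff integrable_dist_square[OF assms(1,2)])
  have "\<bar>(\<integral>x. (dist x y)\<^sup>2 \<partial>\<mu>) - (\<integral>x. (dist x z)\<^sup>2 \<partial>\<mu>)\<bar> = \<bar>\<integral>x. (dist x y)\<^sup>2 - (dist x z)\<^sup>2 \<partial>\<mu>\<bar>"
    by (simp add: integrable_dist_square[OF assms(1,2)])
  also have "\<dots> \<le> (\<integral>x. \<bar>(dist x y)\<^sup>2 - (dist x z)\<^sup>2\<bar> \<partial>\<mu>)"
    using integral_norm_bound[of \<mu> "\<lambda>x. (dist x y)\<^sup>2 - (dist x z)\<^sup>2"] by simp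
  also have "\<dots> \<le> (\<integral>x. dist y z * (2 * R + dist y z) \<partial>\<mu>)"
    using prob_measures_onD(4)[OF assms(2)] pointwise
    by (intro integral_mono_AE integrable_abs[OF integrable_diff]) (auto elim!: eventually_mono)
  also have "\<dots> = dist y z * (2 * R + dist y z)"
    by (simp add: prob_space)
  finally show ?thesis .
qed

lemma isCont_integral_dist_square:
  assumes "bounded X" "\<mu> \<in> prob_measures_on X"
  shows "isCont (\<lambda>y. \<integral>x. (dist x y)\<^sup>2 \<partial>\<mu>) z"
proof -
  obtain R where R: "\<forall>x\<in>X. dist x z \<le> R"
    using bounded_any_center[of X z] assms(1) by (auto simp: dist_commute)
  have "((\<lambda>y. dist y z) \<longlongrightarrow> 0) (at z)"
    using tendsto_dist[OF tendsto_ident_at tendsto_const, of z z] by simp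
  then have "((\<lambda>y. dist y z * (2 * R + dist y z)) \<longlongrightarrow> 0) (at z)"
    using tendsto_mult[OF _ tendsto_add[OF tendsto_const]] by fastforce
  then have "((\<lambda>y. (\<integral>x. (dist x y)\<^sup>2 \<partial>\<mu>) - (\<integral>x. (dist x z)\<^sup>2 \<partial>\<mu>)) \<longlongrightarrow> 0) (at z)"
    by (rule Lim_null_comparison[rotated])
      (simp add: abs_integral_dist_square_diff_le[OF assms R])
  then show ?thesis
    unfolding isCont_def by (simp add: LIM_zero_iff)
qed

lemma approximate_barycenter_in_conv:
  assumes "bounded X" and bary: "\<forall>\<mu>\<in>prob_measures_on X. \<exists>y. is_barycenter \<mu> y"
    and \<mu>: "\<mu> \<in> prob_measures_on X" and max: "\<forall>\<nu>\<in>prob_measures_on X. Var \<nu> \<le> Var \<mu>"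
    and "x0 \<in> X" and t: "0 < t" "t < 1"
  obtains y where "y \<in> conv X" "(\<integral>x. (dist x y)\<^sup>2 \<partial>\<mu>) \<le> Var \<mu> / (1 - t)" "(dist x0 y)\<^sup>2 \<le> Var \<mu>"
proof -
  let ?\<mu>t = "mix_dirac t x0 \<mu>"
  let ?F = "\<lambda>y. \<integral>x. (dist x y)\<^sup>2 \<partial>\<mu>"
  have \<mu>t: "?\<mu>t \<in> prob_measures_on X"
    using mix_dirac_in_prob_measures_on[OF \<mu> \<open>x0 \<in> X\<close>] t by simp
  then obtain y where y: "is_barycenter ?\<mu>t y"
    using bary by blast
  then have "y \<in> conv X"
    using \<mu>t unfolding conv_def by blast
  have "(1 - t) * ?F y + t * (dist x0 y)\<^sup>2 = Var ?\<mu>t"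
    using y integral_dist_square_mix_dirac[OF assms(1) \<mu> \<open>x0 \<in> X\<close>] t
    unfolding is_barycenter_def by simp
  also have "\<dots> \<le> Var \<mu>"
    using max \<mu>t by blast
  finally have y_bound: "(1 - t) * ?F y + t * (dist x0 y)\<^sup>2 \<le> Var \<mu>" .
  have "(1 - t) * Var \<mu> \<le> (1 - t) * ?F y"
    using t Var_le_integral by (intro mult_left_mono) auto
  then have "t * (dist x0 y)\<^sup>2 \<le> t * Var \<mu>"
    using y_bound by (simp add: algebra_simps)
  then have dist_bound: "(dist x0 y)\<^sup>2 \<le> Var \<mu>"
    using t by simp
  have "(1 - t) * ?F y \<le> Var \<mu>"
    using y_bound t zero_le_power2[of "dist x0 y"] mult_nonneg_nonneg[of t "(dist x0 y)\<^sup>2"] by linarith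
  then have "?F y \<le> Var \<mu> / (1 - t)"
    using t by (simp add: pos_le_divide_eq mult.commute)
  with \<open>y \<in> conv X\<close> dist_bound show ?thesis
    using that by blast
qed

lemma dist_square_le_Var_of_maximizer:
  assumes X: "bounded X" and bary: "\<forall>\<mu>\<in>prob_measures_on X. \<exists>y. is_barycenter \<mu> y"
    and "compact (conv X)" and \<mu>: "\<mu> \<in> prob_measures_on X"
    and max: "\<forall>\<nu>\<in>prob_measures_on X. Var \<nu> \<le> Var \<mu>"
    and unique: "\<And>y. is_barycenter \<mu> y \<Longrightarrow> y = b" and "x0 \<in> X"
  shows "(dist x0 b)\<^sup>2 \<le> Var \<mu>"
proof -
  let ?F = "\<lambda>y. \<integral>x. (dist x y)\<^sup>2 \<partial>\<mu>"
  define t where "t n = 1 / (2 + real n)" for n :: nat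
  have t: "0 < t n" "t n < 1" for n
    unfolding t_def by (auto simp: field_simps)
  have "\<exists>y. y \<in> conv X \<and> ?F y \<le> Var \<mu> / (1 - t n) \<and> (dist x0 y)\<^sup>2 \<le> Var \<mu>" for n
    by (rule approximate_barycenter_in_conv[OF X bary \<mu> max \<open>x0 \<in> X\<close> t]) blast
  then obtain bs where bs: "\<And>n. bs n \<in> conv X" "\<And>n. ?F (bs n) \<le> Var \<mu> / (1 - t n)"
      "\<And>n. (dist x0 (bs n))\<^sup>2 \<le> Var \<mu>"
    by metis
  obtain l r where "strict_mono r" and lim: "(bs \<circ> r) \<longlonglongrightarrow> l"
    using seq_compactE[OF compact_imp_seq_compact[OF assms(3)]] bs(1) by metis
  have "t \<longlonglongrightarrow> 0"
    unfolding t_def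
    by (intro tendsto_divide_0[OF tendsto_const] filterlim_at_top_imp_at_infinity
        filterlim_tendsto_add_at_top[OF tendsto_const filterlim_real_sequentially])
  then have "(\<lambda>n. Var \<mu> / (1 - t (r n))) \<longlonglongrightarrow> Var \<mu> / (1 - 0)"
    using LIMSEQ_subseq_LIMSEQ[OF _ \<open>strict_mono r\<close>] by (intro tendsto_intros) (auto simp: o_def)
  moreover have "(\<lambda>n. ?F (bs (r n))) \<longlonglongrightarrow> ?F l"
    using isCont_tendsto_compose[OF isCont_integral_dist_square[OF X \<mu>] lim] by (simp add: o_def)
  ultimately have "?F l \<le> Var \<mu>"
    using bs(2) by (intro LIMSEQ_le) auto
  then have "is_barycenter \<mu> l"
    using Var_le_integral[of \<mu> l] unfolding is_barycenter_def by simp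
  then have "l = b"
    by (rule unique)
  have "(\<lambda>n. (dist x0 (bs (r n)))\<^sup>2) \<longlonglongrightarrow> (dist x0 l)\<^sup>2"
    using lim by (intro tendsto_intros) (simp add: o_def)
  then have "(dist x0 l)\<^sup>2 \<le> Var \<mu>"
    by (rule LIMSEQ_le_const2) (use bs(3) in auto)
  then show ?thesis
    using \<open>l = b\<close> by simp
qed

theorem corollary3p2:
  fixes X :: "'a::complete_space set"
  assumes "compact X"
    and "\<forall>\<mu>\<in>prob_measures_on X. \<exists>y. is_barycenter \<mu> y"
    and "compact (conv X)"
    and "\<exists>\<mu>\<in>prob_measures_on X. (\<forall>\<nu>\<in>prob_measures_on X. Var \<nu> \<le> Var \<mu>)
            \<and> (\<exists>!y. is_barycenter \<mu> y)"
  shows "circumradius X = circumradius_dirac X"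
proof -
  obtain \<mu> b where \<mu>: "\<mu> \<in> prob_measures_on X" and max: "\<forall>\<nu>\<in>prob_measures_on X. Var \<nu> \<le> Var \<mu>"
    and unique: "\<And>y. is_barycenter \<mu> y \<Longrightarrow> y = b"
    using assms(4) by blast
  have "\<forall>x\<in>X. dist x b \<le> sqrt (Var \<mu>)"
    using dist_square_le_Var_of_maximizer[OF compact_imp_bounded[OF assms(1)] assms(2,3) \<mu> max unique]
    by (simp add: real_le_rsqrt)
  then have "circumradius X \<le> ennreal (sqrt (Var \<mu>))"
    by (rule circumradius_le)
  also have "\<dots> \<le> circumradius_dirac X"
    by (rule sqrt_Var_le_circumradius_dirac[OF assms(1) \<mu>])
  finally show ?thesis
    using circumradius_dirac_le_circumradius by (rule antisym)
qed

end
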